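(* For all $n \geq m \geq 1$, the image of the Haar probability measure on $U(n)$ under the map $\pi_{n,m}: U(n)\to U(m)$ is the Haar probability measure on $U(m)$.
   Context: Let $(e_k)$ be the canonical basis of $\ell^2$; identify $\mathbb{C}^n$ with the span of $e_1,\dots,e_n$ and $U(n)$ with the unitary operators fixing every $e_k$, $k>n$. For $n\ge m\ge1$ and $u\in U(n)$, $\pi_{n,m}(u)$ is the unique $v\in U(m)$ such that the range of $u-v$ is contained in $(u-\mathrm{Id})(\mathrm{span}\{e_k:k>m\})$ (existence and uniqueness are known; $\pi_{n,m}$ is Borel measurable). *)

theory Defs
  imports "HOL-Analysis.Analysis" "HOL-Probability.Probability"
begin

text \<open>Operators on l2 fixing all but finitely many basis vectors are represented by their
  matrices A :: nat => nat => complex w.r.t. the canonical basis; index k (0-based) stands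
  for the basis vector e_(k+1). Thus C^n is the span of the indices 0..n-1.\<close>

type_synonym cmatrix = "nat \<Rightarrow> nat \<Rightarrow> complex"

definition idm :: cmatrix where
  "idm = (\<lambda>i j. if i = j then 1 else 0)"

text \<open>U(n): unitary operators fixing every e_k with k > n.\<close>
definition Unitary :: "nat \<Rightarrow> cmatrix set" where
  "Unitary n = {A. (\<forall>i j. (n \<le> i \<or> n \<le> j) \<longrightarrow> A i j = idm i j) \<and>
              (\<forall>i<n. \<forall>j<n. (\<Sum>k<n. cnj (A k i) * A k j) = idm i j)}"

definition mapply :: "nat \<Rightarrow> cmatrix \<Rightarrow> (nat \<Rightarrow> complex) \<Rightarrow> (nat \<Rightarrow> complex)" where
  "mapply n A x = (\<lambda>i. \<Sum>j<n. A i j * x j)"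

definition mmul :: "nat \<Rightarrow> cmatrix \<Rightarrow> cmatrix \<Rightarrow> cmatrix" where
  "mmul n A B = (\<lambda>i j. if i < n \<and> j < n then (\<Sum>k<n. A i k * B k j) else idm i j)"

definition Un_borel :: "nat \<Rightarrow> cmatrix measure" where
  "Un_borel n = restrict_space borel (Unitary n)"

definition is_haar :: "nat \<Rightarrow> cmatrix measure \<Rightarrow> bool" where
  "is_haar n \<mu> \<longleftrightarrow> sets \<mu> = sets (Un_borel n) \<and> prob_space \<mu> \<and>
     (\<forall>g\<in>Unitary n. distr \<mu> (Un_borel n) (mmul n g) = \<mu>)"

text \<open>pi_{n,m}(u): the unique v in U(m) such that range(u - v) is contained in
  (u - Id)(span{e_k : k > m}). For u in U(n), v in U(m), m <= n, the operator u - v vanishes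
  on e_k for k > n, so its range is the set of mapply n (u - v) x; likewise u - Id kills e_k,
  k > n, so (u - Id) y only depends on the components of y below n.\<close>
definition pi_nm :: "nat \<Rightarrow> nat \<Rightarrow> cmatrix \<Rightarrow> cmatrix" where
  "pi_nm n m u = (THE v. v \<in> Unitary m \<and>
      (\<forall>x. \<exists>y. (\<forall>j<m. y j = 0) \<and> mapply n (u - v) x = mapply n (u - idm) y))"

end

theory Submission
  imports Defs
begin

text \<open>Uniqueness of \<open>pi_nm n m u\<close> holds because \<open>u\<close> preserves norms. The defining range
  condition is transitive along \<open>n \<ge> k \<ge> m\<close>, and from \<open>U(k+1)\<close> to \<open>U(k)\<close> it is solved by
  the Schur-complement formula \<open>u i j + u i k * u k j / (1 - u k k)\<close>; so \<open>pi_nm n m\<close> is a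
  composition of such Borel maps. Left multiplication by \<open>g \<in> U(m) \<subseteq> U(n)\<close> fixes
  \<open>span {e_k : k > m}\<close> and hence preserves the range condition, giving
  \<open>pi_nm n m (g u) = g (pi_nm n m u)\<close>. The image of a left-invariant probability measure under an
  equivariant Borel map is again left-invariant.\<close>

lemma idm_sym: "idm i j = idm j i"
  by (auto simp: idm_def)

lemma cnj_idm [simp]: "cnj (idm i j) = idm i j"
  by (simp add: idm_def)

lemma idm_mult: "idm i j * z = (if i = j then z else 0)" "z * idm i j = (if i = j then z else (0::complex))"
  by (simp_all add: idm_def)

lemma UnitaryD_out: "A \<in> Unitary n \<Longrightarrow> n \<le> i \<or> n \<le> j \<Longrightarrow> A i j = idm i j"
  unfolding Unitary_def by blast

lemma UnitaryD_orth: "A \<in> Unitary n \<Longrightarrow> i < n \<Longrightarrow> j < n \<Longrightarrow> (\<Sum>k<n. cnj (A k i) * A k j) = idm i j"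
  by (simp add: Unitary_def)

lemma sum_lessThan_split:
  fixes m n :: nat
  shows "m \<le> n \<Longrightarrow> (\<Sum>k<n. f k) = (\<Sum>k<m. f k) + (\<Sum>k\<in>{m..<n}. f k)"
  using sum.atLeastLessThan_concat[of 0 m n f] by (simp add: atLeast0LessThan)

lemma Unitary_mono:
  assumes "m \<le> n" shows "Unitary m \<subseteq> Unitary n"
proof
  fix A assume A: "A \<in> Unitary m"
  have "(\<Sum>k<n. cnj (A k i) * A k j) = idm i j" if ij: "i < n" "j < n" for i j
  proof (cases "m \<le> i \<or> m \<le> j")
    case True
    then consider "m \<le> i" | "m \<le> j" by blast
    then show ?thesis
    proof cases
      case 1
      then have "(\<Sum>k<n. cnj (A k i) * A k j) = (\<Sum>k<n. cnj (idm k i) * A k j)"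
        using A by (intro sum.cong) (auto simp: UnitaryD_out)
      also have "\<dots> = A i j" using ij by (simp add: idm_mult)
      finally show ?thesis using 1 A by (simp add: UnitaryD_out)
    next
      case 2
      then have "(\<Sum>k<n. cnj (A k i) * A k j) = (\<Sum>k<n. cnj (A k i) * idm k j)"
        using A by (intro sum.cong) (auto simp: UnitaryD_out)
      also have "\<dots> = cnj (A j i)" using ij by (simp add: idm_mult)
      finally show ?thesis using 2 A by (simp add: UnitaryD_out idm_sym)
    qed
  next
    case False
    have "(\<Sum>k\<in>{m..<n}. cnj (A k i) * A k j) = 0"
      using False A by (intro sum.neutral) (auto simp: UnitaryD_out idm_def)
    then show ?thesis
      using False A assms by (simp add: sum_lessThan_split[of m n] UnitaryD_orth)
  qed
  then show "A \<in> Unitary n"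
    using A assms by (auto simp: Unitary_def)
qed

lemma sum_cnj_mult_self_eq_0:
  fixes w :: "nat \<Rightarrow> complex"
  assumes "(\<Sum>i\<in>S. cnj (w i) * w i) = 0" "finite S" "i \<in> S"
  shows "w i = 0"
proof -
  have "cnj (w i) * w i = of_real ((cmod (w i))\<^sup>2)" for i
    by (subst complex_norm_square) (simp add: mult.commute)
  then have "of_real (\<Sum>i\<in>S. (cmod (w i))\<^sup>2) = (0::complex)"
    using assms(1) by (simp only: of_real_sum)
  then have "(\<Sum>i\<in>S. (cmod (w i))\<^sup>2) = 0"
    by (simp only: of_real_eq_0_iff)
  then show ?thesis
    using assms(2,3) by (simp add: sum_nonneg_eq_0_iff)
qed

lemma mapply_diff: "mapply n (A - B) x = (\<lambda>i. mapply n A x i - mapply n B x i)"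
  by (auto simp: mapply_def algebra_simps sum_subtractf)

lemma mapply_vdiff: "mapply n A (\<lambda>j. x j - y j) = (\<lambda>i. mapply n A x i - mapply n A y i)"
  by (auto simp: mapply_def algebra_simps sum_subtractf)

lemma mapply_vadd: "mapply n A (\<lambda>j. x j + y j) = (\<lambda>i. mapply n A x i + mapply n A y i)"
  by (auto simp: mapply_def algebra_simps sum.distrib)

lemma mapply_idm: "mapply n idm x i = (if i < n then x i else 0)"
  by (simp add: mapply_def idm_mult)

lemma mapply_basis: "c < n \<Longrightarrow> mapply n A (\<lambda>j. if j = c then 1 else 0) = (\<lambda>i. A i c)"
  by (simp add: mapply_def if_distrib cong: if_cong)

lemma mapply_cong: "(\<And>j. j < n \<Longrightarrow> x j = x' j) \<Longrightarrow> mapply n A x = mapply n A x'"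
  unfolding mapply_def by (intro ext sum.cong) simp_all

lemma mapply_shrink:
  assumes "k \<le> n" "\<And>i j. k \<le> j \<Longrightarrow> j < n \<Longrightarrow> A i j = 0"
  shows "mapply n A x = mapply k A x"
proof
  fix i
  have "(\<Sum>j\<in>{k..<n}. A i j * x j) = 0" using assms(2) by (intro sum.neutral) auto
  then show "mapply n A x i = mapply k A x i"
    using assms(1) by (simp add: mapply_def sum_lessThan_split[of k n])
qed

lemma mapply_Unitary_inner:
  assumes "A \<in> Unitary n"
  shows "(\<Sum>i<n. cnj (mapply n A z i) * mapply n A w i) = (\<Sum>j<n. cnj (z j) * w j)"
proof -
  have "(\<Sum>i<n. cnj (mapply n A z i) * mapply n A w i)
      = (\<Sum>i<n. \<Sum>j<n. \<Sum>l<n. cnj (z j) * w l * (cnj (A i j) * A i l))"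
    by (simp add: mapply_def sum_distrib_left sum_distrib_right mult_ac)
  also have "\<dots> = (\<Sum>j<n. \<Sum>l<n. cnj (z j) * w l * (\<Sum>i<n. cnj (A i j) * A i l))"
  proof -
    have "(\<Sum>i<n. \<Sum>j<n. \<Sum>l<n. cnj (z j) * w l * (cnj (A i j) * A i l))
        = (\<Sum>j<n. \<Sum>l<n. \<Sum>i<n. cnj (z j) * w l * (cnj (A i j) * A i l))"
      by (subst sum.swap) (intro sum.cong refl sum.swap)
    then show ?thesis by (simp add: sum_distrib_left)
  qed
  also have "\<dots> = (\<Sum>j<n. \<Sum>l<n. cnj (z j) * w l * idm j l)"
    using assms by (intro sum.cong) (simp_all add: UnitaryD_orth)
  also have "\<dots> = (\<Sum>j<n. cnj (z j) * w j)"
    by (simp add: idm_mult)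
  finally show ?thesis .
qed

text \<open>By conservation of the norm, no mass of \<open>u z\<close> is left for the first \<open>m\<close> coordinates.\<close>

lemma mapply_Unitary_head_eq_0:
  assumes u: "u \<in> Unitary n" and mn: "m \<le> n" and z: "\<And>j. j < m \<Longrightarrow> z j = 0"
    and tail: "\<And>i. m \<le> i \<Longrightarrow> i < n \<Longrightarrow> mapply n u z i = z i" and i: "i < m"
  shows "mapply n u z i = 0"
proof -
  let ?w = "mapply n u z"
  have "(\<Sum>i<m. cnj (?w i) * ?w i) + (\<Sum>i\<in>{m..<n}. cnj (z i) * z i)
      = (\<Sum>i<n. cnj (?w i) * ?w i)"
    using mn tail by (simp add: sum_lessThan_split[of m n])
  also have "\<dots> = (\<Sum>j<n. cnj (z j) * z j)"
    using u by (rule mapply_Unitary_inner)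
  also have "\<dots> = (\<Sum>i\<in>{m..<n}. cnj (z i) * z i)"
    using mn z by (simp add: sum_lessThan_split[of m n])
  finally have "(\<Sum>i<m. cnj (?w i) * ?w i) = 0" by simp
  then show ?thesis using i by (intro sum_cnj_mult_self_eq_0) auto
qed

section \<open>The range condition defining \<open>pi_nm\<close>\<close>

definition range_cond :: "nat \<Rightarrow> nat \<Rightarrow> cmatrix \<Rightarrow> cmatrix \<Rightarrow> bool" where
  "range_cond n m u v \<longleftrightarrow>
     (\<forall>x. \<exists>y. (\<forall>j<m. y j = 0) \<and> mapply n (u - v) x = mapply n (u - idm) y)"

lemma pi_nm_eq_The: "pi_nm n m u = (THE v. v \<in> Unitary m \<and> range_cond n m u v)"
  by (simp add: pi_nm_def range_cond_def)

lemma range_cond_unique: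
  assumes mn: "m \<le> n" and u: "u \<in> Unitary n" and v1: "v1 \<in> Unitary m" and v2: "v2 \<in> Unitary m"
    and c1: "range_cond n m u v1" and c2: "range_cond n m u v2"
  shows "v1 = v2"
proof (intro ext)
  fix i c
  show "v1 i c = v2 i c"
  proof (cases "i < m \<and> c < m")
    case False
    then show ?thesis using v1 v2 by (auto simp: UnitaryD_out)
  next
    case True
    define x where "x = (\<lambda>j. if j = c then 1 else (0::complex))"
    obtain y1 where y1: "\<forall>j<m. y1 j = 0" "mapply n (u - v1) x = mapply n (u - idm) y1"
      using c1 unfolding range_cond_def by blast
    obtain y2 where y2: "\<forall>j<m. y2 j = 0" "mapply n (u - v2) x = mapply n (u - idm) y2"
      using c2 unfolding range_cond_def by blast
    define z where "z = (\<lambda>j. y1 j - y2 j)"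
    have col: "v2 i' c - v1 i' c = mapply n u z i' - (if i' < n then z i' else 0)" for i'
    proof -
      have "mapply n (u - idm) z i' = mapply n (u - v1) x i' - mapply n (u - v2) x i'"
        unfolding z_def mapply_vdiff y1(2) y2(2) by simp
      then show ?thesis
        using True mn by (simp add: x_def mapply_basis mapply_diff mapply_idm)
    qed
    have tail: "mapply n u z i' = z i'" if "m \<le> i'" "i' < n" for i'
      using col[of i'] that v1 v2 by (simp add: UnitaryD_out)
    have "mapply n u z i = 0"
      using mapply_Unitary_head_eq_0[OF u mn _ tail] True y1(1) y2(1) by (simp add: z_def)
    then show ?thesis
      using col[of i] True mn y1(1) y2(1) by (simp add: z_def)
  qed
qed

lemma range_cond_refl: "range_cond n m u u"
  unfolding range_cond_def by (intro allI exI[of _ "\<lambda>j. 0"]) (simp add: mapply_def)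

lemma range_cond_trans:
  assumes mk: "m \<le> k" and kn: "k \<le> n" and v: "v \<in> Unitary k" and w: "w \<in> Unitary m"
    and uv: "range_cond n k u v" and vw: "range_cond k m v w"
  shows "range_cond n m u w"
  unfolding range_cond_def
proof
  fix x
  obtain y1 where y1: "\<forall>j<k. y1 j = 0" "mapply n (u - v) x = mapply n (u - idm) y1"
    using uv unfolding range_cond_def by blast
  obtain y2 where y2: "\<forall>j<m. y2 j = 0" "mapply k (v - w) x = mapply k (v - idm) y2"
    using vw unfolding range_cond_def by blast
  obtain y3 where y3: "\<forall>j<k. y3 j = 0" "mapply n (u - v) y2 = mapply n (u - idm) y3"
    using uv unfolding range_cond_def by blast
  have vw_n: "mapply n (v - w) x = mapply k (v - w) x"
    using kn v w mk by (intro mapply_shrink) (simp_all add: UnitaryD_out)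
  have v_n: "mapply n (v - idm) y2 = mapply k (v - idm) y2"
    using kn v by (intro mapply_shrink) (simp_all add: UnitaryD_out)
  define y where "y = (\<lambda>j. y1 j + y2 j - y3 j)"
  have "mapply n (u - w) x = mapply n (u - idm) y"
  proof
    fix i
    have "mapply n (u - w) x i = mapply n (u - v) x i + mapply n (v - w) x i"
      by (simp add: mapply_def algebra_simps sum.distrib[symmetric])
    also have "mapply n (v - w) x i = mapply n (u - idm) y2 i - mapply n (u - v) y2 i"
      unfolding vw_n y2(2) v_n[symmetric] by (simp add: mapply_def algebra_simps sum_subtractf[symmetric])
    finally show "mapply n (u - w) x i = mapply n (u - idm) y i"
      unfolding y_def y1(2) y3(2) mapply_vdiff mapply_vadd by (simp only: add_diff_eq)
  qed
  moreover have "\<forall>j<m. y j = 0" using y1(1) y2(1) y3(1) mk by (simp add: y_def)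
  ultimately show "\<exists>y. (\<forall>j<m. y j = 0) \<and> mapply n (u - w) x = mapply n (u - idm) y" by blast
qed

section \<open>Compressing \<open>U(k+1)\<close> to \<open>U(k)\<close>\<close>

lemma Unitary_Suc_orth:
  assumes "u \<in> Unitary (Suc k)" "a \<le> k" "b \<le> k"
  shows "(\<Sum>i<k. cnj (u i a) * u i b) = idm a b - cnj (u k a) * u k b"
  using UnitaryD_orth[OF assms(1), of a b] assms(2,3) by (simp add: algebra_simps)

lemma Unitary_Suc_corner_eq_1:
  assumes u: "u \<in> Unitary (Suc k)" and d: "u k k = 1" and j: "j < k"
  shows "u j k = 0" "u k j = 0"
proof -
  have "(\<Sum>i<k. cnj (u i k) * u i k) = 0"
    using Unitary_Suc_orth[OF u, of k k] d by (simp add: idm_def)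
  then have col: "u i k = 0" if "i < k" for i
    using that by (intro sum_cnj_mult_self_eq_0[of "\<lambda>i. u i k" "{..<k}"]) auto
  then show "u j k = 0" using j by blast
  have "(\<Sum>i<k. cnj (u i k) * u i j) = 0" using col by simp
  then show "u k j = 0"
    using Unitary_Suc_orth[OF u, of k j] d j by (simp add: idm_def)
qed

text \<open>On the first \<open>k\<close> coordinates, \<open>idm - compress k u\<close> is the Schur complement of the corner
  entry \<open>1 - u k k\<close> in \<open>idm - u\<close>. When \<open>u k k = 1\<close> the division yields \<open>0\<close>; then row and
  column \<open>k\<close> of \<open>u\<close> are trivial and \<open>compress k u\<close> simply truncates \<open>u\<close>.\<close>

definition compress :: "nat \<Rightarrow> cmatrix \<Rightarrow> cmatrix" where
  "compress k u = (\<lambda>i j. if i < k \<and> j < k then u i j + u i k * u k j / (1 - u k k) else idm i j)"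

lemma sum_cnj_mult_add_expand:
  "(\<Sum>i\<in>I. cnj (f i + h i * \<alpha>) * (g i + h i * \<beta>)) =
     (\<Sum>i\<in>I. cnj (f i) * g i) + \<beta> * (\<Sum>i\<in>I. cnj (f i) * h i)
     + cnj \<alpha> * (\<Sum>i\<in>I. cnj (h i) * g i) + cnj \<alpha> * \<beta> * (\<Sum>i\<in>I. cnj (h i) * h i)"
  by (simp add: sum.distrib sum_distrib_left algebra_simps)

lemma compress_gram_identity:
  fixes a b d \<delta> :: complex
  assumes "d = 1 \<Longrightarrow> a = 0"
  shows "(\<delta> - cnj a * b) + b / (1 - d) * (- cnj a * d) + cnj (a / (1 - d)) * (- cnj d * b)
         + cnj (a / (1 - d)) * (b / (1 - d)) * (1 - cnj d * d) = \<delta>"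
proof (cases "d = 1")
  case False
  then have "1 - d \<noteq> 0" "1 - cnj d \<noteq> 0" by (auto simp: complex_eq_iff)
  then show ?thesis by (simp add: divide_simps) algebra
qed (use assms in simp)

lemma compress_Unitary:
  assumes u: "u \<in> Unitary (Suc k)"
  shows "compress k u \<in> Unitary k"
proof -
  define d where "d = u k k"
  define \<alpha> where "\<alpha> c = u k c / (1 - d)" for c
  have "(\<Sum>i<k. cnj (compress k u i a) * compress k u i b) = idm a b" if ab: "a < k" "b < k" for a b
  proof -
    have "(\<Sum>i<k. cnj (compress k u i a) * compress k u i b)
        = (\<Sum>i<k. cnj (u i a + u i k * \<alpha> a) * (u i b + u i k * \<alpha> b))"
      using ab by (intro sum.cong) (simp_all add: compress_def \<alpha>_def d_def)
    also have "\<dots> = (idm a b - cnj (u k a) * u k b) + \<alpha> b * (- cnj (u k a) * d)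
        + cnj (\<alpha> a) * (- cnj d * u k b) + cnj (\<alpha> a) * \<alpha> b * (1 - cnj d * d)"
      using Unitary_Suc_orth[OF u] ab unfolding sum_cnj_mult_add_expand
      by (simp add: idm_def d_def)
    also have "\<dots> = idm a b"
      unfolding \<alpha>_def using Unitary_Suc_corner_eq_1(2)[OF u _ ab(1)]
      by (intro compress_gram_identity) (simp add: d_def)
    finally show ?thesis .
  qed
  then show ?thesis
    by (auto simp: Unitary_def compress_def)
qed

lemma compress_range_cond:
  assumes u: "u \<in> Unitary (Suc k)"
  shows "range_cond (Suc k) k u (compress k u)"
  unfolding range_cond_def
proof
  fix x
  define s where "s = 1 - u k k"
  define S where "S = (\<Sum>j<k. u k j * x j)"
  define t where "t = x k - S / s" \<comment> \<open>makes row \<open>k\<close> of both sides agree\<close>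
  define y where "y = (\<lambda>j. if j = k then t else (0::complex))"
  have rhs: "mapply (Suc k) (u - idm) y i = (u i k - idm i k) * t" for i
    by (simp add: mapply_def y_def if_distrib cong: if_cong)
  have lhs: "mapply (Suc k) (u - compress k u) x i
      = (\<Sum>j<k. (u i j - compress k u i j) * x j) + (u i k - idm i k) * x k" for i
    by (simp add: mapply_def compress_def)
  have "mapply (Suc k) (u - compress k u) x i = mapply (Suc k) (u - idm) y i" for i
  proof -
    consider "i < k" | "i = k" | "k < i" by linarith
    then show ?thesis
    proof cases
      case 1
      have "(\<Sum>j<k. (u i j - compress k u i j) * x j) = - (u i k * S / s)"
        using 1 by (simp add: compress_def s_def S_def sum_distrib_left sum_negf mult.assoc
            flip: sum_divide_distrib)
      then show ?thesis
        unfolding lhs rhs using 1 by (simp add: idm_def t_def algebra_simps)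
    next
      case 2
      have "(\<Sum>j<k. (u i j - compress k u i j) * x j) = S"
        using 2 by (simp add: S_def compress_def idm_def)
      moreover have "S = 0" if "s = 0"
        using that Unitary_Suc_corner_eq_1(2)[OF u] by (simp add: S_def s_def)
      ultimately show ?thesis
        unfolding lhs rhs using 2 by (cases "s = 0") (simp_all add: t_def s_def idm_def field_simps)
    next
      case 3
      then show ?thesis
        using u by (simp add: mapply_def compress_def UnitaryD_out)
    qed
  qed
  then show "\<exists>y. (\<forall>j<k. y j = 0) \<and> mapply (Suc k) (u - compress k u) x = mapply (Suc k) (u - idm) y"
    by (intro exI[of _ y]) (auto simp: y_def)
qed

lemma range_cond_exists:
  assumes "m \<le> n" "u \<in> Unitary n"
  shows "\<exists>v\<in>Unitary m. range_cond n m u v"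
  using assms
proof (induction n arbitrary: u rule: dec_induct)
  case base
  then show ?case using range_cond_refl by blast
next
  case (step k)
  have cu: "compress k u \<in> Unitary k"
    using step.prems by (rule compress_Unitary)
  then obtain w where w: "w \<in> Unitary m" "range_cond k m (compress k u) w"
    using step.IH by blast
  have "range_cond (Suc k) m u w"
    using compress_range_cond[OF step.prems] step.hyps cu w
    by (intro range_cond_trans[of m k "Suc k"]) auto
  then show ?case using w(1) by blast
qed

lemma pi_nm_spec:
  assumes "m \<le> n" "u \<in> Unitary n"
  shows "pi_nm n m u \<in> Unitary m" "range_cond n m u (pi_nm n m u)"
proof -
  have "\<exists>!v. v \<in> Unitary m \<and> range_cond n m u v"
    using range_cond_exists[OF assms] range_cond_unique[OF assms] by blast
  then have "pi_nm n m u \<in> Unitary m \<and> range_cond n m u (pi_nm n m u)"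
    unfolding pi_nm_eq_The by (rule theI')
  then show "pi_nm n m u \<in> Unitary m" "range_cond n m u (pi_nm n m u)" by auto
qed

lemma pi_nm_eqI:
  assumes "m \<le> n" "u \<in> Unitary n" "v \<in> Unitary m" "range_cond n m u v"
  shows "pi_nm n m u = v"
  using range_cond_unique[OF assms(1,2)] pi_nm_spec[OF assms(1,2)] assms(3,4) by blast

lemma pi_nm_self: "u \<in> Unitary n \<Longrightarrow> pi_nm n n u = u"
  by (rule pi_nm_eqI) (simp_all add: range_cond_refl)

lemma pi_nm_Suc:
  assumes "m \<le> k" "u \<in> Unitary (Suc k)"
  shows "pi_nm (Suc k) m u = pi_nm k m (compress k u)"
proof (rule pi_nm_eqI)
  have cu: "compress k u \<in> Unitary k" using assms(2) by (rule compress_Unitary)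
  show "pi_nm k m (compress k u) \<in> Unitary m" using pi_nm_spec(1)[OF assms(1) cu] .
  show "range_cond (Suc k) m u (pi_nm k m (compress k u))"
    using compress_range_cond[OF assms(2)] pi_nm_spec[OF assms(1) cu] assms(1) cu
    by (intro range_cond_trans[of m k "Suc k"]) auto
qed (use assms in auto)

section \<open>Borel measurability\<close>

lemma measurable_cmatrix_entry [measurable]: "(\<lambda>u::cmatrix. u i j) \<in> borel_measurable borel"
  using measurable_comp[OF measurable_product_coordinates measurable_product_coordinates]
  by (simp add: comp_def)

lemma measurable_Un_borel:
  fixes f :: "cmatrix \<Rightarrow> cmatrix"
  assumes "\<And>i j. (\<lambda>u. f u i j) \<in> borel_measurable borel"
    and "\<And>u. u \<in> Unitary n \<Longrightarrow> f u \<in> Unitary m"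
  shows "f \<in> measurable (Un_borel n) (Un_borel m)"
  unfolding Un_borel_def
proof (rule measurable_restrict_space2)
  show "f \<in> borel_measurable (restrict_space borel (Unitary n))"
    by (intro measurable_restrict_space1 measurable_coordinatewise_then_product assms(1))
qed (use assms(2) in \<open>auto simp: space_restrict_space\<close>)

lemma compress_measurable: "compress k \<in> measurable (Un_borel (Suc k)) (Un_borel k)"
  by (rule measurable_Un_borel[OF _ compress_Unitary]) (simp add: compress_def)

lemma pi_nm_measurable:
  assumes "m \<le> n"
  shows "pi_nm n m \<in> measurable (Un_borel n) (Un_borel m)"
  using assms
proof (induction n rule: dec_induct)
  case base
  have "(\<lambda>u. u) \<in> measurable (Un_borel m) (Un_borel m)" by simp
  then show ?case
    by (rule measurable_cong[THEN iffD1, rotated]) (simp add: Un_borel_def space_restrict_space pi_nm_self)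
next
  case (step k)
  have "pi_nm k m \<circ> compress k \<in> measurable (Un_borel (Suc k)) (Un_borel m)"
    using compress_measurable step.IH by (rule measurable_comp)
  then show ?case
    by (rule measurable_cong[THEN iffD1, rotated])
      (simp add: Un_borel_def space_restrict_space pi_nm_Suc step.hyps)
qed

section \<open>Equivariance under left multiplication\<close>

lemma mmul_Unitary:
  assumes A: "A \<in> Unitary n" and B: "B \<in> Unitary n"
  shows "mmul n A B \<in> Unitary n"
proof -
  have "(\<Sum>k<n. cnj (mmul n A B k a) * mmul n A B k b) = idm a b" if ab: "a < n" "b < n" for a b
  proof -
    have "(\<Sum>k<n. cnj (mmul n A B k a) * mmul n A B k b)
        = (\<Sum>k<n. cnj (mapply n A (\<lambda>l. B l a) k) * mapply n A (\<lambda>l. B l b) k)"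
      using ab by (intro sum.cong) (simp_all add: mmul_def mapply_def)
    also have "\<dots> = idm a b"
      using ab by (simp add: mapply_Unitary_inner[OF A] UnitaryD_orth[OF B])
    finally show ?thesis .
  qed
  then show ?thesis by (auto simp: Unitary_def mmul_def)
qed

lemma mmul_measurable: "g \<in> Unitary n \<Longrightarrow> mmul n g \<in> measurable (Un_borel n) (Un_borel n)"
  by (rule measurable_Un_borel[OF _ mmul_Unitary]) (simp_all add: mmul_def)

lemma mmul_Unitary_mono:
  assumes mn: "m \<le> n" and g: "g \<in> Unitary m" and v: "v \<in> Unitary m"
  shows "mmul n g v = mmul m g v"
proof (intro ext)
  fix i j
  consider "i < m" "j < m" | "m \<le> i" "i < n" "j < n" | "m \<le> j" "i < n" "j < n" | "n \<le> i \<or> n \<le> j"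
    by linarith
  then show "mmul n g v i j = mmul m g v i j"
  proof cases
    case 1
    have "(\<Sum>k\<in>{m..<n}. g i k * v k j) = 0"
      using 1 g by (intro sum.neutral) (auto simp: UnitaryD_out idm_def)
    then show ?thesis
      using 1 mn by (simp add: mmul_def sum_lessThan_split[of m n])
  next
    case 2
    then have "(\<Sum>k<n. g i k * v k j) = v i j"
      using g by (simp add: UnitaryD_out idm_mult)
    then show ?thesis using 2 v by (simp add: mmul_def UnitaryD_out)
  next
    case 3
    then have "(\<Sum>k<n. g i k * v k j) = g i j"
      using v by (simp add: UnitaryD_out idm_mult)
    then show ?thesis using 3 g by (simp add: mmul_def UnitaryD_out)
  next
    case 4
    then show ?thesis using mn by (auto simp: mmul_def)
  qed
qed

lemma mapply_mmul:
  assumes "A \<in> Unitary n"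
  shows "mapply n (mmul n A B) x = mapply n A (mapply n B x)"
proof
  fix i
  show "mapply n (mmul n A B) x i = mapply n A (mapply n B x) i"
  proof (cases "i < n")
    case True
    have "(\<Sum>j<n. mmul n A B i j * x j) = (\<Sum>j<n. \<Sum>k<n. A i k * (B k j * x j))"
      using True by (intro sum.cong) (simp_all add: mmul_def sum_distrib_right mult.assoc)
    also have "\<dots> = (\<Sum>k<n. \<Sum>j<n. A i k * (B k j * x j))" by (rule sum.swap)
    finally show ?thesis by (simp add: mapply_def sum_distrib_left)
  next
    case False
    then show ?thesis using assms by (simp add: mapply_def mmul_def UnitaryD_out idm_def)
  qed
qed

lemma mapply_Unitary_tail:
  assumes "g \<in> Unitary m" "\<And>j. j < m \<Longrightarrow> y j = 0"
  shows "mapply n g y = mapply n idm y"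
  unfolding mapply_def
proof (intro ext sum.cong refl)
  fix i j
  show "g i j * y j = idm i j * y j"
    using assms by (cases "j < m") (simp_all add: UnitaryD_out)
qed

lemma range_cond_mmul_left:
  assumes mn: "m \<le> n" and g: "g \<in> Unitary m" and uv: "range_cond n m u v"
  shows "range_cond n m (mmul n g u) (mmul n g v)"
  unfolding range_cond_def
proof
  fix x
  obtain y where y: "\<forall>j<m. y j = 0" "mapply n (u - v) x = mapply n (u - idm) y"
    using uv unfolding range_cond_def by blast
  have gn: "g \<in> Unitary n" using Unitary_mono[OF mn] g by blast
  have "mapply n (mmul n g u - mmul n g v) x = mapply n g (mapply n (u - v) x)"
    by (simp add: mapply_diff mapply_vdiff mapply_mmul[OF gn])
  also have "\<dots> = mapply n g (mapply n (u - idm) y)" by (simp only: y(2))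
  also have "\<dots> = (\<lambda>i. mapply n (mmul n g u) y i - mapply n g (mapply n idm y) i)"
    by (simp add: mapply_diff mapply_vdiff mapply_mmul[OF gn])
  also have "mapply n g (mapply n idm y) = mapply n g y"
    by (rule mapply_cong) (simp add: mapply_idm)
  also have "mapply n g y = mapply n idm y"
    using g y(1) by (intro mapply_Unitary_tail) auto
  also have "(\<lambda>i. mapply n (mmul n g u) y i - mapply n idm y i) = mapply n (mmul n g u - idm) y"
    by (simp add: mapply_diff)
  finally show "\<exists>y. (\<forall>j<m. y j = 0) \<and>
      mapply n (mmul n g u - mmul n g v) x = mapply n (mmul n g u - idm) y"
    using y(1) by blast
qed

lemma pi_nm_mmul:
  assumes mn: "m \<le> n" and g: "g \<in> Unitary m" and u: "u \<in> Unitary n"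
  shows "pi_nm n m (mmul n g u) = mmul m g (pi_nm n m u)"
proof (rule pi_nm_eqI[OF mn])
  have gn: "g \<in> Unitary n" using Unitary_mono[OF mn] g by blast
  show "mmul n g u \<in> Unitary n" using gn u by (rule mmul_Unitary)
  show "mmul m g (pi_nm n m u) \<in> Unitary m" using g pi_nm_spec(1)[OF mn u] by (rule mmul_Unitary)
  show "range_cond n m (mmul n g u) (mmul m g (pi_nm n m u))"
    using range_cond_mmul_left[OF mn g pi_nm_spec(2)[OF mn u]]
    by (simp add: mmul_Unitary_mono[OF mn g pi_nm_spec(1)[OF mn u]])
qed

lemma distr_invariant_equivariant:
  assumes f: "f \<in> measurable M N" and g: "g \<in> measurable M M" and h: "h \<in> measurable N N"
    and sets: "sets \<mu> = sets M" and inv: "distr \<mu> M g = \<mu>"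
    and equiv: "\<And>x. x \<in> space M \<Longrightarrow> f (g x) = h (f x)"
  shows "distr (distr \<mu> N f) N h = distr \<mu> N f"
proof -
  have f': "f \<in> measurable \<mu> N" and g': "g \<in> measurable \<mu> M"
    using f g measurable_cong_sets[OF sets refl] by auto
  have "distr (distr \<mu> N f) N h = distr \<mu> N (h \<circ> f)"
    by (rule distr_distr[OF h f'])
  also have "\<dots> = distr \<mu> N (f \<circ> g)"
    using equiv sets_eq_imp_space_eq[OF sets] by (intro distr_cong) auto
  also have "\<dots> = distr (distr \<mu> M g) N f"
    by (rule distr_distr[OF f g', symmetric])
  finally show ?thesis by (simp only: inv)
qed

theorem proposition3p2:
  fixes n m :: nat and \<mu> :: "cmatrix measure"
  assumes "1 \<le> m" and "m \<le> n" and "is_haar n \<mu>"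
  shows "is_haar m (distr \<mu> (Un_borel m) (pi_nm n m))"
proof -
  have sets: "sets \<mu> = sets (Un_borel n)" and prob: "prob_space \<mu>"
    and inv: "\<And>g. g \<in> Unitary n \<Longrightarrow> distr \<mu> (Un_borel n) (mmul n g) = \<mu>"
    using assms(3) unfolding is_haar_def by auto
  have pi: "pi_nm n m \<in> measurable (Un_borel n) (Un_borel m)"
    using assms(2) by (rule pi_nm_measurable)
  show ?thesis
    unfolding is_haar_def
  proof (intro conjI ballI)
    show "prob_space (distr \<mu> (Un_borel m) (pi_nm n m))"
      using prob pi measurable_cong_sets[OF sets refl] by (auto intro: prob_space.prob_space_distr)
  next
    fix g assume g: "g \<in> Unitary m"
    then have gn: "g \<in> Unitary n" using Unitary_mono[OF assms(2)] by blast
    show "distr (distr \<mu> (Un_borel m) (pi_nm n m)) (Un_borel m) (mmul m g)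
        = distr \<mu> (Un_borel m) (pi_nm n m)"
      using pi mmul_measurable[OF gn] mmul_measurable[OF g] sets inv[OF gn]
      by (rule distr_invariant_equivariant)
        (simp add: Un_borel_def space_restrict_space pi_nm_mmul[OF assms(2) g])
  qed simp
qed

end
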